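(* Let $0<p<\infty$ and let $E$ be a normed space (over $\mathbb{R}$ or $\mathbb{C}$) with $\dim E=n$. Then the identity operator $id_E$ satisfies $$\pi_p(id_E)\le n^{\max\{\frac1p,\frac12\}}.$$
   Context: For $0<p<\infty$ and a bounded linear operator $u:E\to F$ between normed spaces, $\pi_p(u)$ denotes the infimum of all constants $C\ge 0$ such that $\left(\sum_{k=1}^{N}\|u(x_k)\|^p\right)^{1/p}\le C\sup_{\varphi\in B_{E^*}}\left(\sum_{k=1}^{N}|\varphi(x_k)|^p\right)^{1/p}$ for all $N\in\mathbb{N}$ and all $x_1,\dots,x_N\in E$. Here $B_{E^*}$ is the closed unit ball of the topological dual $E^*$ (this extends the usual absolutely $p$-summing norm to all $p>0$). *)

theory Defs
  imports "HOL-Analysis.Analysis"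
begin

definition normed_sp :: "('k::real_normed_field \<Rightarrow> 'v::ab_group_add \<Rightarrow> 'v) \<Rightarrow> ('v \<Rightarrow> real) \<Rightarrow> bool" where
  "normed_sp s N \<longleftrightarrow> Vector_Spaces.vector_space s
     \<and> (\<forall>x. N x = 0 \<longleftrightarrow> x = 0)
     \<and> (\<forall>c x. N (s c x) = norm c * N x)
     \<and> (\<forall>x y. N (x + y) \<le> N x + N y)"

definition has_dim :: "('k::field \<Rightarrow> 'v::ab_group_add \<Rightarrow> 'v) \<Rightarrow> nat \<Rightarrow> bool" where
  "has_dim s n \<longleftrightarrow> (\<exists>B. finite B \<and> module.span s B = UNIV) \<and> vector_space.dim s UNIV = n"

text \<open>Closed unit ball of the (topological) dual: linear functionals of norm at most 1.
  (In a finite-dimensional space every linear functional is bounded.)\<close>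
definition dual_ball :: "('k::real_normed_field \<Rightarrow> 'v::ab_group_add \<Rightarrow> 'v) \<Rightarrow> ('v \<Rightarrow> real) \<Rightarrow> ('v \<Rightarrow> 'k) set" where
  "dual_ball s N = {\<phi>. Vector_Spaces.linear s (*) \<phi> \<and> (\<forall>x. norm (\<phi> x) \<le> N x)}"

definition pi_summing :: "real \<Rightarrow> ('k::real_normed_field \<Rightarrow> 'v::ab_group_add \<Rightarrow> 'v) \<Rightarrow> ('v \<Rightarrow> real)
    \<Rightarrow> ('w \<Rightarrow> real) \<Rightarrow> ('v \<Rightarrow> 'w) \<Rightarrow> real" where
  "pi_summing p s NE NF u = Inf {C. C \<ge> 0 \<and> (\<forall>(M::nat) (x::nat \<Rightarrow> 'v).
      (\<Sum>k\<in>{1..M}. NF (u (x k)) powr p) powr (1/p)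
        \<le> C * (SUP \<phi>\<in>dual_ball s NE. (\<Sum>k\<in>{1..M}. norm (\<phi> (x k)) powr p) powr (1/p)))}"

end

theory Submission
  imports Defs
begin

text \<open>Let x_1, ..., x_M be given, choose norming functionals \<psi>_k with \<psi>_k(x_k) = \<parallel>x_k\<parallel>
  (Hahn--Banach), and put \<lambda>_l = \<parallel>x_l\<parallel>^((p-2)/2). The M \<times> M matrix with entries
  \<lambda>_l \<psi>_k(x_l) has rank at most n, since its rows are combinations of the n coordinate sequences of
  the x_l. For such a matrix the squared moduli of the diagonal entries add up to at most n times the
  largest squared row norm (the trace of an orthogonal projection of rank at most n is at most n).
  The diagonal gives \<Sum>_k \<parallel>x_k\<parallel>^p. A row norm is \<Sum>_l \<parallel>x_l\<parallel>^(p-2) |\<psi>_k(x_l)|^2; for p \<le> 2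
  it is at most \<Sum>_l |\<psi>_k(x_l)|^p \<le> w^p, where w is the weak p-norm of the sequence, and for
  p > 2 Hoelder's inequality bounds it by (\<Sum>_l \<parallel>x_l\<parallel>^p)^(1-2/p) w^2. Solving for
  (\<Sum>_k \<parallel>x_k\<parallel>^p)^(1/p) gives the constants n^(1/p) and n^(1/2).\<close>

section \<open>Hahn--Banach theorem in finite dimensions\<close>

definition linear_functional_on :: "('k::field \<Rightarrow> 'v::ab_group_add \<Rightarrow> 'v) \<Rightarrow> 'v set \<Rightarrow> ('v \<Rightarrow> 'k) \<Rightarrow> bool" where
  "linear_functional_on s W g \<longleftrightarrow>
     (\<forall>a\<in>W. \<forall>b\<in>W. g (a + b) = g a + g b) \<and> (\<forall>c. \<forall>a\<in>W. g (s c a) = c * g a)"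

lemma (in vector_space) span_insert_unique_coefficient:
  assumes W: "subspace W" and y: "y \<notin> W"
    and "v - scale k y \<in> W" and "v - scale k' y \<in> W"
  shows "k = k'"
proof (rule ccontr)
  assume neq: "k \<noteq> k'"
  have "(v - scale k' y) - (v - scale k y) \<in> W" by (rule subspace_diff[OF W assms(4,3)])
  then have "scale (k - k') y \<in> W" by (simp add: scale_left_diff_distrib)
  then have "scale (1 / (k - k')) (scale (k - k') y) \<in> W" using W by (rule subspace_scale[rotated])
  with neq y show False by simp
qed

lemma (in vector_space) linear_extension_by_value:
  assumes W: "subspace W" and y: "y \<notin> W" and f: "linear_functional_on scale W f"
  obtains g where "linear_functional_on scale (span (insert y W)) g"
    and "\<And>w k. w \<in> W \<Longrightarrow> g (w + scale k y) = f w + k * c"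
proof -
  define t where "t v = (SOME k. v - scale k y \<in> W)" for v
  have t: "t v = k" if "v - scale k y \<in> W" for v k
    using someI[of "\<lambda>k. v - scale k y \<in> W", OF that] span_insert_unique_coefficient[OF W y] that
    unfolding t_def by blast
  define g where "g v = f (v - scale (t v) y) + t v * c" for v
  have gI: "g v = f (v - scale k y) + k * c" if "v - scale k y \<in> W" for v k
    using t[OF that] by (simp add: g_def)
  have in_span: "v \<in> span (insert y W) \<longleftrightarrow> (\<exists>k. v - scale k y \<in> W)" for v
    using span_insert[of y W] W by (simp flip: span_eq_iff)
  have fadd: "f (a + b) = f a + f b" if "a \<in> W" "b \<in> W" for a b
    using f that unfolding linear_functional_on_def by blast
  have fscale: "f (scale r a) = r * f a" if "a \<in> W" for a r
    using f that unfolding linear_functional_on_def by blast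
  have "linear_functional_on scale (span (insert y W)) g"
    unfolding linear_functional_on_def
  proof (intro conjI ballI allI)
    fix a b assume "a \<in> span (insert y W)" "b \<in> span (insert y W)"
    then obtain ka kb where ka: "a - scale ka y \<in> W" and kb: "b - scale kb y \<in> W" using in_span by blast
    have e: "a + b - scale (ka + kb) y = (a - scale ka y) + (b - scale kb y)"
      by (simp add: scale_left_distrib algebra_simps)
    have "a + b - scale (ka + kb) y \<in> W" unfolding e using W ka kb by (rule subspace_add)
    then have "g (a + b) = f (a + b - scale (ka + kb) y) + (ka + kb) * c" by (rule gI)
    then show "g (a + b) = g a + g b"
      unfolding e fadd[OF ka kb] gI[OF ka] gI[OF kb] by (simp add: algebra_simps)
  next
    fix r a assume "a \<in> span (insert y W)"
    then obtain ka where ka: "a - scale ka y \<in> W" using in_span by blast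
    have e: "scale r a - scale (r * ka) y = scale r (a - scale ka y)"
      by (simp add: scale_right_diff_distrib)
    have "scale r a - scale (r * ka) y \<in> W" unfolding e by (rule subspace_scale[OF W ka])
    then have "g (scale r a) = f (scale r a - scale (r * ka) y) + (r * ka) * c" by (rule gI)
    then show "g (scale r a) = r * g a"
      unfolding e fscale[OF ka] gI[OF ka] by (simp add: algebra_simps)
  qed
  moreover have "g (w + scale k y) = f w + k * c" if "w \<in> W" for w k
    using gI[of "w + scale k y" k] that by simp
  ultimately show ?thesis by (rule that)
qed

lemma (in vector_space) linear_functional_on_UNIV_iff:
  "linear_functional_on scale UNIV g \<longleftrightarrow> Vector_Spaces.linear scale (*) g"
  unfolding linear_functional_on_def Vector_Spaces.linear_iff
  using vector_space_axioms vector_space_over_itself.vector_space_axioms by auto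

locale real_seminormed_space = vector_space s
  for s :: "real \<Rightarrow> 'v::ab_group_add \<Rightarrow> 'v" +
  fixes N :: "'v \<Rightarrow> real"
  assumes seminorm_triangle: "N (x + y) \<le> N x + N y"
    and seminorm_scale: "N (s c x) = \<bar>c\<bar> * N x"
begin

lemma seminorm_nonneg: "0 \<le> N x"
proof -
  have "N (x + s (-1) x) \<le> N x + N (s (-1) x)" by (rule seminorm_triangle)
  then show ?thesis using seminorm_scale[of "-1" x] seminorm_scale[of 0 x] by simp
qed

lemma dominated_extension_step:
  assumes W: "subspace W" and y: "y \<notin> W"
    and f: "linear_functional_on s W f" and fN: "\<forall>w\<in>W. f w \<le> N w"
  obtains g where "linear_functional_on s (span (insert y W)) g" and "\<forall>w\<in>W. g w = f w"
    and "\<forall>v\<in>span (insert y W). g v \<le> N v"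
proof -
  have fadd: "f (a + b) = f a + f b" if "a \<in> W" "b \<in> W" for a b
    using f that unfolding linear_functional_on_def by blast
  have fscale: "f (s r a) = r * f a" if "a \<in> W" for a r
    using f that unfolding linear_functional_on_def by blast
  have W0: "0 \<in> W" using W by (rule subspace_0)
  \<comment> \<open>The admissible values of the extension at y form the interval between these two bounds.\<close>
  have gap: "f w1 - N (w1 - y) \<le> N (w2 + y) - f w2" if "w1 \<in> W" "w2 \<in> W" for w1 w2
  proof -
    have "f w1 + f w2 \<le> N (w1 + w2)"
      using fN subspace_add[OF W that] fadd[OF that] by fastforce
    also have "N (w1 + w2) = N ((w1 - y) + (w2 + y))" by simp
    also have "\<dots> \<le> N (w1 - y) + N (w2 + y)" by (rule seminorm_triangle)
    finally show ?thesis by simp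
  qed
  define c where "c = Inf ((\<lambda>w. N (w + y) - f w) ` W)"
  have c_upper: "c \<le> N (w + y) - f w" if "w \<in> W" for w
    unfolding c_def using gap[OF W0] that by (intro cInf_lower bdd_belowI2) auto
  have c_lower: "f w - N (w - y) \<le> c" if "w \<in> W" for w
    unfolding c_def using gap[OF that] W0 by (intro cInf_greatest) auto
  obtain g where g: "linear_functional_on s (span (insert y W)) g"
    and gI: "\<And>w k. w \<in> W \<Longrightarrow> g (w + s k y) = f w + k * c"
    using linear_extension_by_value[OF W y f] by blast
  have "g (w + s k y) \<le> N (w + s k y)" if w: "w \<in> W" for w k
  proof -
    consider "k > 0" | "k < 0" | "k = 0" by linarith
    then show ?thesis
    proof cases
      case 1
      have w': "s (1 / k) w \<in> W" by (rule subspace_scale[OF W w])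
      have "k * c \<le> k * (N (s (1 / k) w + y) - f (s (1 / k) w))"
        using 1 c_upper[OF w'] by simp
      also have "\<dots> = N (s k (s (1 / k) w + y)) - f w"
        using 1 seminorm_scale by (simp add: right_diff_distrib fscale[OF w])
      finally show ?thesis using 1 by (simp add: gI[OF w] scale_right_distrib)
    next
      case 2
      define m where "m = - k"
      have m: "m > 0" using 2 by (simp add: m_def)
      have w': "s (1 / m) w \<in> W" by (rule subspace_scale[OF W w])
      have e: "w - s m y = s m (s (1 / m) w - y)" using m by (simp add: scale_right_diff_distrib)
      have "f w - N (w - s m y) = m * (f (s (1 / m) w) - N (s (1 / m) w - y))"
        unfolding e using m seminorm_scale by (simp add: fscale[OF w] right_diff_distrib)
      also have "\<dots> \<le> m * c" using m c_lower[OF w'] by simp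
      finally show ?thesis by (simp add: gI[OF w] m_def)
    qed (use gI[OF w, of 0] fN w in simp)
  qed
  moreover have "v \<in> span (insert y W) \<Longrightarrow> \<exists>w\<in>W. \<exists>k. v = w + s k y" for v
    using span_insert[of y W] W by (force simp flip: span_eq_iff)
  ultimately show ?thesis using that[OF g] gI[of _ 0] by fastforce
qed

lemma hahn_banach_span:
  assumes "finite G"
  shows "\<exists>g. linear_functional_on s (span (insert x0 G)) g \<and> g x0 = N x0
           \<and> (\<forall>v\<in>span (insert x0 G). g v \<le> N v)"
  using assms
proof (induction G rule: finite_induct)
  case empty
  show ?case
  proof (cases "x0 = 0")
    case True
    then show ?thesis
      using seminorm_scale[of 0 0] by (intro exI[of _ "\<lambda>_. 0"]) (auto simp: linear_functional_on_def)
  next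
    case False
    have f0: "linear_functional_on s {0} (\<lambda>_. 0)" by (simp add: linear_functional_on_def)
    have x0: "x0 \<notin> {0}" using False by simp
    obtain g where g: "linear_functional_on s (span (insert x0 {0})) g"
      and gI: "\<And>w k. w \<in> {0} \<Longrightarrow> g (w + s k x0) = 0 + k * N x0"
      using linear_extension_by_value[OF subspace_single_0 x0 f0, where c = "N x0"] by blast
    have gI: "g (s k x0) = k * N x0" for k using gI[of 0 k] by simp
    have "g v \<le> N v" if v: "v \<in> span {x0}" for v
    proof -
      obtain k where "v = s k x0" using v by (auto simp: span_singleton)
      moreover have "k * N x0 \<le> \<bar>k\<bar> * N x0" using seminorm_nonneg[of x0] by (simp add: mult_right_mono)
      ultimately show ?thesis by (simp add: gI seminorm_scale)
    qed
    moreover have "span (insert x0 {0}) = span {x0}" by (metis insert_commute span_insert_0)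
    ultimately show ?thesis using g gI[of 1] by (intro exI[of _ g]) simp
  qed
next
  case (insert y G)
  define W where "W = span (insert x0 G)"
  from insert.IH obtain f where f: "linear_functional_on s W f" and fx0: "f x0 = N x0"
    and fN: "\<forall>w\<in>W. f w \<le> N w" unfolding W_def by blast
  have "span (insert y W) = {x. \<exists>k. x - s k y \<in> span W}" by (rule span_insert)
  also have "\<dots> = span (insert y (insert x0 G))" unfolding W_def span_span by (rule span_insert[symmetric])
  finally have span_eq: "span (insert x0 (insert y G)) = span (insert y W)" by (simp add: insert_commute)
  have x0W: "x0 \<in> W" unfolding W_def by (simp add: span_base)
  show ?case
  proof (cases "y \<in> W")
    case True
    then have "span (insert y W) = W" unfolding W_def by (simp add: span_redundant span_span)
    then show ?thesis using f fx0 fN span_eq W_def by auto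
  next
    case False
    obtain g where "linear_functional_on s (span (insert y W)) g" "\<forall>w\<in>W. g w = f w"
      "\<forall>v\<in>span (insert y W). g v \<le> N v"
      using dominated_extension_step[OF _ False f fN] unfolding W_def by auto
    then show ?thesis using fx0 x0W span_eq by (intro exI[of _ g]) auto
  qed
qed

lemma hahn_banach_finite_dim:
  assumes "finite F" and "span F = UNIV"
  obtains g where "Vector_Spaces.linear s (*) g" and "g x0 = N x0" and "\<And>x. \<bar>g x\<bar> \<le> N x"
proof -
  have span_UNIV: "span (insert x0 F) = UNIV" using span_mono[of F "insert x0 F"] assms(2) by auto
  obtain g where g: "linear_functional_on s UNIV g" and gx0: "g x0 = N x0" and gN: "\<And>v. g v \<le> N v"
    using hahn_banach_span[OF assms(1), of x0] unfolding span_UNIV by blast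
  have "g (s (-1) x) = - g x" for x using g unfolding linear_functional_on_def by (metis UNIV_I mult_minus1)
  then have "\<bar>g x\<bar> \<le> N x" for x using gN[of x] gN[of "s (-1) x"] seminorm_scale[of "-1" x] by auto
  with g gx0 show ?thesis by (intro that[of g]) (simp_all add: linear_functional_on_UNIV_iff)
qed

end

section \<open>Norming functionals\<close>

lemma real_normed_sp_seminormed:
  fixes s :: "real \<Rightarrow> 'v::ab_group_add \<Rightarrow> 'v"
  assumes "normed_sp s N"
  shows "real_seminormed_space s N"
  using assms unfolding normed_sp_def real_seminormed_space_def real_seminormed_space_axioms_def by auto

lemma dual_ball_norming_real:
  fixes s :: "real \<Rightarrow> 'v::ab_group_add \<Rightarrow> 'v"
  assumes "normed_sp s N" and "finite F" and "module.span s F = UNIV"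
  shows "\<exists>\<psi>\<in>dual_ball s N. N x \<le> norm (\<psi> x)"
proof -
  interpret real_seminormed_space s N using assms(1) by (rule real_normed_sp_seminormed)
  obtain g where "Vector_Spaces.linear s (*) g" "g x = N x" "\<And>x. \<bar>g x\<bar> \<le> N x"
    using hahn_banach_finite_dim[OF assms(2,3)] by blast
  then show ?thesis unfolding dual_ball_def by (intro bexI[of _ g]) auto
qed

lemma complex_normed_sp_restrict_scalars:
  fixes s :: "complex \<Rightarrow> 'v::ab_group_add \<Rightarrow> 'v"
  assumes "normed_sp s N"
  shows "real_seminormed_space (\<lambda>r. s (complex_of_real r)) N"
proof -
  interpret vector_space s using assms unfolding normed_sp_def by auto
  show ?thesis
    using assms unfolding normed_sp_def
    by unfold_locales (simp_all add: scale_right_distrib scale_left_distrib)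
qed

lemma complex_scale_decompose:
  fixes s :: "complex \<Rightarrow> 'v::ab_group_add \<Rightarrow> 'v"
  assumes "vector_space s"
  shows "s c x = s (complex_of_real (Re c)) x + s (complex_of_real (Im c)) (s \<i> x)"
proof -
  interpret vector_space s by fact
  have "s (complex_of_real (Re c)) x + s (complex_of_real (Im c)) (s \<i> x)
      = s (complex_of_real (Re c) + complex_of_real (Im c) * \<i>) x"
    by (simp add: scale_left_distrib)
  also have "complex_of_real (Re c) + complex_of_real (Im c) * \<i> = c" by (simp add: complex_eq_iff)
  finally show ?thesis by simp
qed

lemma complex_span_restrict_scalars:
  fixes s :: "complex \<Rightarrow> 'v::ab_group_add \<Rightarrow> 'v"
  assumes vs: "vector_space s" and F: "finite F" "module.span s F = UNIV"
  shows "module.span (\<lambda>r. s (complex_of_real r)) (F \<union> s \<i> ` F) = UNIV"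
proof -
  interpret vector_space s by (rule vs)
  define sr where "sr r = s (complex_of_real r)" for r
  interpret r: vector_space sr
    by unfold_locales (simp_all add: sr_def scale_right_distrib scale_left_distrib)
  have decomp: "s c v = sr (Re c) v + sr (Im c) (s \<i> v)" for c v
    unfolding sr_def by (rule complex_scale_decompose[OF vs])
  have "x \<in> r.span (F \<union> s \<i> ` F)" for x
  proof -
    have "x \<in> span F" using F(2) by simp
    then obtain u where x: "x = (\<Sum>v\<in>F. s (u v) v)" using span_finite[OF F(1)] by auto
    have "s (u v) v \<in> r.span (F \<union> s \<i> ` F)" if "v \<in> F" for v
      unfolding decomp[of "u v" v] using that by (intro r.span_add r.span_scale r.span_base) auto
    then show ?thesis unfolding x by (intro r.span_sum) auto
  qed
  then show ?thesis unfolding sr_def by auto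
qed

lemma complexified_functional_in_dual_ball:
  fixes s :: "complex \<Rightarrow> 'v::ab_group_add \<Rightarrow> 'v"
  assumes vs: "vector_space s" and scale: "\<And>c x. N (s c x) = norm c * N x"
    and g: "Vector_Spaces.linear (\<lambda>r. s (complex_of_real r)) (*) g" and gN: "\<And>x. \<bar>g x\<bar> \<le> N x"
  shows "(\<lambda>x. complex_of_real (g x) - \<i> * complex_of_real (g (s \<i> x))) \<in> dual_ball s N"
proof -
  interpret vector_space s by (rule vs)
  define \<phi> where "\<phi> x = complex_of_real (g x) - \<i> * complex_of_real (g (s \<i> x))" for x
  have Re_\<phi>: "Re (\<phi> x) = g x" for x by (simp add: \<phi>_def)
  have gadd: "g (a + b) = g a + g b" and greal: "g (s (complex_of_real r) a) = r * g a" for a b r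
    using g unfolding Vector_Spaces.linear_iff by auto
  have gscale: "g (s c x) = Re c * g x + Im c * g (s \<i> x)" for c x
    by (subst complex_scale_decompose[OF vs]) (simp only: gadd greal)
  have \<phi>_add: "\<phi> (a + b) = \<phi> a + \<phi> b" for a b
    by (simp add: \<phi>_def gadd scale_right_distrib algebra_simps)
  have \<phi>_scale: "\<phi> (s c x) = c * \<phi> x" for c x
  proof -
    have "g (s \<i> (s c x)) = g (s (\<i> * c) x)" by simp
    also have "\<dots> = - Im c * g x + Re c * g (s \<i> x)" unfolding gscale[of "\<i> * c" x] by simp
    finally show ?thesis unfolding \<phi>_def gscale[of c x] by (simp add: complex_eq_iff algebra_simps)
  qed
  have lin: "Vector_Spaces.linear s (*) \<phi>"
    unfolding Vector_Spaces.linear_iff using vs vector_space_over_itself.vector_space_axioms \<phi>_add \<phi>_scale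
    by auto
  have "norm (\<phi> x) \<le> N x" for x
  proof (cases "\<phi> x = 0")
    case True then show ?thesis using gN[of x] by simp
  next
    case False
    \<comment> \<open>Rotating x makes the value of \<phi> real and positive, so that it equals the value of g.\<close>
    define u where "u = cnj (\<phi> x) / complex_of_real (cmod (\<phi> x))"
    have "\<phi> (s u x) = u * \<phi> x" by (rule \<phi>_scale)
    also have "\<dots> = complex_of_real (cmod (\<phi> x))"
      using False by (simp add: u_def field_simps power2_eq_square flip: complex_norm_square)
    finally have "cmod (\<phi> x) = g (s u x)" using Re_\<phi>[of "s u x"] by simp
    also have "\<dots> \<le> N (s u x)" using gN abs_le_D1 by blast
    also have "\<dots> = N x" using False by (simp add: scale u_def norm_divide)
    finally show ?thesis .
  qed
  with lin have "\<phi> \<in> dual_ball s N" unfolding dual_ball_def by blast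
  then show ?thesis by (simp add: \<phi>_def[abs_def])
qed

lemma dual_ball_norming_complex:
  fixes s :: "complex \<Rightarrow> 'v::ab_group_add \<Rightarrow> 'v"
  assumes ns: "normed_sp s N" and F: "finite F" "module.span s F = UNIV"
  shows "\<exists>\<psi>\<in>dual_ball s N. N x \<le> norm (\<psi> x)"
proof -
  have vs: "vector_space s" and scale: "\<And>c x. N (s c x) = norm c * N x"
    using ns unfolding normed_sp_def by auto
  interpret r: real_seminormed_space "\<lambda>r. s (complex_of_real r)" N
    using ns by (rule complex_normed_sp_restrict_scalars)
  obtain g where g: "Vector_Spaces.linear (\<lambda>r. s (complex_of_real r)) (*) g"
    and gx: "g x = N x" and gN: "\<And>x. \<bar>g x\<bar> \<le> N x"
    using r.hahn_banach_finite_dim[OF _ complex_span_restrict_scalars[OF vs F]] F(1) by blast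
  let ?\<phi> = "\<lambda>x. complex_of_real (g x) - \<i> * complex_of_real (g (s \<i> x))"
  have "N x \<le> norm (?\<phi> x)" using gx abs_Re_le_cmod[of "?\<phi> x"] by simp
  with complexified_functional_in_dual_ball[OF vs scale g gN] show ?thesis by (intro bexI[of _ ?\<phi>])
qed

section \<open>Diagonals of matrices of bounded rank\<close>

definition cinner :: "nat \<Rightarrow> (nat \<Rightarrow> complex) \<Rightarrow> (nat \<Rightarrow> complex) \<Rightarrow> complex" where
  "cinner M u v = (\<Sum>l\<in>{1..M}. u l * cnj (v l))"

definition orthonormal_family :: "nat \<Rightarrow> nat \<Rightarrow> (nat \<Rightarrow> nat \<Rightarrow> complex) \<Rightarrow> bool" where
  "orthonormal_family M r w \<longleftrightarrow> (\<forall>i<r. \<forall>i'<r. cinner M (w i) (w i') = (if i = i' then 1 else 0))"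

lemma cinner_sum_left:
  "cinner M (\<lambda>l. \<Sum>i\<in>I. c i * w i l) v = (\<Sum>i\<in>I. c i * cinner M (w i) v)"
  unfolding cinner_def by (simp add: sum_distrib_left sum_distrib_right mult.assoc sum.swap[of _ I])

lemma cinner_sum_right:
  "cinner M v (\<lambda>l. \<Sum>i\<in>I. c i * w i l) = (\<Sum>i\<in>I. cnj (c i) * cinner M v (w i))"
  unfolding cinner_def
  by (simp add: sum_distrib_left sum_distrib_right mult.assoc mult.left_commute sum.swap[of _ I])

lemma cinner_self: "cinner M u u = complex_of_real (\<Sum>l\<in>{1..M}. (cmod (u l))\<^sup>2)"
  unfolding cinner_def of_real_sum by (rule sum.cong[OF refl], rule complex_norm_square[symmetric])

lemma orthonormal_family_extend:
  assumes on: "orthonormal_family M r w" and orth: "\<And>i. i < r \<Longrightarrow> cinner M u (w i) = 0"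
    and pos: "0 < (\<Sum>l\<in>{1..M}. (cmod (u l))\<^sup>2)"
  shows "orthonormal_family M (Suc r) (w(r := (\<lambda>l. u l / complex_of_real (sqrt (\<Sum>l\<in>{1..M}. (cmod (u l))\<^sup>2)))))"
    (is "orthonormal_family M (Suc r) ?w")
proof -
  define \<nu> where "\<nu> = (\<Sum>l\<in>{1..M}. (cmod (u l))\<^sup>2)"
  have \<nu>: "\<nu> > 0" using pos by (simp add: \<nu>_def)
  have new_unit: "cinner M (?w r) (?w r) = 1"
  proof -
    have "cinner M (?w r) (?w r) = cinner M u u / (complex_of_real (sqrt \<nu>) * complex_of_real (sqrt \<nu>))"
      unfolding cinner_def \<nu>_def by (simp add: sum_divide_distrib)
    also have "\<dots> = 1" using \<nu> by (simp only: cinner_self \<nu>_def[symmetric] flip: of_real_mult, simp)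
    finally show ?thesis .
  qed
  have new_orth: "cinner M (?w r) (?w i) = 0" "cinner M (?w i) (?w r) = 0" if "i < r" for i
  proof -
    have "cinner M (?w r) (?w i) = cinner M u (w i) / complex_of_real (sqrt \<nu>)"
      unfolding cinner_def \<nu>_def using that by (simp add: sum_divide_distrib)
    then show "cinner M (?w r) (?w i) = 0" using orth that by simp
    have "cinner M (?w i) (?w r) = cnj (cinner M u (w i)) / complex_of_real (sqrt \<nu>)"
      unfolding cinner_def \<nu>_def using that by (simp add: sum_divide_distrib mult.commute)
    then show "cinner M (?w i) (?w r) = 0" using orth that by simp
  qed
  show ?thesis
    unfolding orthonormal_family_def
  proof (intro allI impI)
    fix i i' assume "i < Suc r" "i' < Suc r"
    then consider "i < r" "i' < r" | "i = r" "i' = r" | "i = r" "i' < r" | "i < r" "i' = r" by linarith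
    then show "cinner M (?w i) (?w i') = (if i = i' then 1 else 0)"
      using on new_unit new_orth unfolding orthonormal_family_def by cases auto
  qed
qed

lemma orthonormal_family_exists:
  assumes "finite J"
  shows "\<exists>r w \<alpha>. r \<le> card J \<and> orthonormal_family M r w \<and>
     (\<forall>j\<in>J. \<forall>l\<in>{1..M}. V j l = (\<Sum>i<r. \<alpha> j i * w i l))"
  using assms
proof (induction J rule: finite_induct)
  case empty
  show ?case by (rule exI[of _ 0]) (auto simp: orthonormal_family_def)
next
  case (insert j0 J)
  from insert.IH obtain r w \<alpha> where r: "r \<le> card J" and on: "orthonormal_family M r w"
    and rep: "\<forall>j\<in>J. \<forall>l\<in>{1..M}. V j l = (\<Sum>i<r. \<alpha> j i * w i l)" by blast
  have card: "card (insert j0 J) = Suc (card J)" using insert by simp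
  \<comment> \<open>Gram--Schmidt: d are the Fourier coefficients of V j0, and u the residual.\<close>
  define d where "d i = cinner M (V j0) (w i)" for i
  define u where "u l = V j0 l - (\<Sum>i<r. d i * w i l)" for l
  have orth: "cinner M u (w i) = 0" if "i < r" for i
  proof -
    have "cinner M u (w i) = d i - cinner M (\<lambda>l. \<Sum>i<r. d i * w i l) (w i)"
      unfolding u_def d_def cinner_def by (simp add: algebra_simps sum_subtractf)
    also have "cinner M (\<lambda>l. \<Sum>i<r. d i * w i l) (w i) = (\<Sum>i'<r. if i' = i then d i else 0)"
      unfolding cinner_sum_left using on that by (intro sum.cong) (auto simp: orthonormal_family_def)
    finally show ?thesis using that by simp
  qed
  define \<nu> where "\<nu> = (\<Sum>l\<in>{1..M}. (cmod (u l))\<^sup>2)"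
  show ?case
  proof (cases "\<nu> = 0")
    case True
    then have "u l = 0" if "l \<in> {1..M}" for l
      using that sum_nonneg_eq_0_iff[of "{1..M}" "\<lambda>l. (cmod (u l))\<^sup>2"] unfolding \<nu>_def by auto
    then have "\<forall>l\<in>{1..M}. V j0 l = (\<Sum>i<r. d i * w i l)" by (auto simp: u_def)
    then show ?thesis using r on rep card
      by (intro exI[of _ r] exI[of _ w] exI[of _ "\<alpha>(j0 := d)"]) auto
  next
    case False
    then have pos: "\<nu> > 0" unfolding \<nu>_def by (simp add: order_le_neq_trans sum_nonneg)
    define w' where "w' = w(r := (\<lambda>l. u l / complex_of_real (sqrt \<nu>)))"
    define \<alpha>' where "\<alpha>' = (\<lambda>j i. if i < r then \<alpha> j i else 0)
      (j0 := (\<lambda>i. if i < r then d i else complex_of_real (sqrt \<nu>)))"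
    have on': "orthonormal_family M (Suc r) w'"
      unfolding w'_def \<nu>_def using orthonormal_family_extend[OF on orth] pos \<nu>_def by blast
    have "V j l = (\<Sum>i<Suc r. \<alpha>' j i * w' i l)" if j: "j \<in> insert j0 J" and l: "l \<in> {1..M}" for j l
    proof -
      have old: "(\<Sum>i<r. f i * w' i l) = (\<Sum>i<r. f i * w i l)" for f
        by (rule sum.cong) (auto simp: w'_def)
      show ?thesis
      proof (cases "j = j0")
        case True
        then show ?thesis using pos old[of d] by (simp add: \<alpha>'_def w'_def u_def)
      next
        case False
        then show ?thesis using j l rep old[of "\<alpha> j"] by (simp add: \<alpha>'_def)
      qed
    qed
    then show ?thesis using r card on'
      by (intro exI[of _ "Suc r"] exI[of _ w'] exI[of _ \<alpha>']) auto
  qed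
qed

lemma orthonormal_family_parseval:
  assumes "orthonormal_family M r w"
  shows "(\<Sum>l\<in>{1..M}. (cmod (\<Sum>i<r. \<beta> i * w i l))\<^sup>2) = (\<Sum>i<r. (cmod (\<beta> i))\<^sup>2)"
proof -
  let ?R = "\<lambda>l. \<Sum>i<r. \<beta> i * w i l"
  have "complex_of_real (\<Sum>l\<in>{1..M}. (cmod (?R l))\<^sup>2) = cinner M ?R ?R"
    by (simp only: cinner_self)
  also have "\<dots> = (\<Sum>i<r. \<beta> i * (\<Sum>i'<r. cnj (\<beta> i') * cinner M (w i) (w i')))"
    by (simp only: cinner_sum_left cinner_sum_right)
  also have "\<dots> = (\<Sum>i<r. \<beta> i * cnj (\<beta> i))"
  proof (rule sum.cong[OF refl])
    fix i assume i: "i \<in> {..<r}"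
    have "(\<Sum>i'<r. cnj (\<beta> i') * cinner M (w i) (w i')) = (\<Sum>i'<r. if i' = i then cnj (\<beta> i) else 0)"
      using assms i unfolding orthonormal_family_def by (intro sum.cong) auto
    then show "\<beta> i * (\<Sum>i'<r. cnj (\<beta> i') * cinner M (w i) (w i')) = \<beta> i * cnj (\<beta> i)"
      using i by simp
  qed
  also have "\<dots> = complex_of_real (\<Sum>i<r. (cmod (\<beta> i))\<^sup>2)"
    unfolding of_real_sum by (rule sum.cong[OF refl], rule complex_norm_square[symmetric])
  finally show ?thesis by (simp only: of_real_eq_iff)
qed

lemma norm_sum_mult_square_le:
  "(cmod (\<Sum>i\<in>I. b i * x i))\<^sup>2 \<le> (\<Sum>i\<in>I. (cmod (b i))\<^sup>2) * (\<Sum>i\<in>I. (cmod (x i))\<^sup>2)"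
proof -
  have "cmod (\<Sum>i\<in>I. b i * x i) \<le> (\<Sum>i\<in>I. cmod (b i) * cmod (x i))"
    by (rule order_trans[OF norm_sum]) (simp add: norm_mult)
  then have "(cmod (\<Sum>i\<in>I. b i * x i))\<^sup>2 \<le> (\<Sum>i\<in>I. cmod (b i) * cmod (x i))\<^sup>2"
    by (rule power_mono) simp
  also have "\<dots> \<le> (\<Sum>i\<in>I. (cmod (b i))\<^sup>2) * (\<Sum>i\<in>I. (cmod (x i))\<^sup>2)"
    by (rule Cauchy_Schwarz_ineq_sum)
  finally show ?thesis .
qed

text \<open>The rows of the matrix with entries \<Sum>j\<in>J. a k j * V j l lie in a space of dimension at most
  card J. Expanding them in an orthonormal basis w of that space bounds the square of the k-th
  diagonal entry by the squared row norm times the weight \<Sum>i. |w i k|^2, and these weights add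
  up to the dimension.\<close>
lemma diagonal_square_sum_le_card_times_row_bound:
  fixes V :: "'j \<Rightarrow> nat \<Rightarrow> complex" and a :: "nat \<Rightarrow> 'j \<Rightarrow> complex"
  assumes J: "finite J" and S: "S \<ge> 0"
    and rows: "\<And>k. k \<in> {1..M} \<Longrightarrow> (\<Sum>l\<in>{1..M}. (cmod (\<Sum>j\<in>J. a k j * V j l))\<^sup>2) \<le> S"
  shows "(\<Sum>k\<in>{1..M}. (cmod (\<Sum>j\<in>J. a k j * V j k))\<^sup>2) \<le> real (card J) * S"
proof -
  obtain r w \<alpha> where r: "r \<le> card J" and on: "orthonormal_family M r w"
    and rep: "\<forall>j\<in>J. \<forall>l\<in>{1..M}. V j l = (\<Sum>i<r. \<alpha> j i * w i l)"
    using orthonormal_family_exists[OF J] by blast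
  define \<beta> where "\<beta> k i = (\<Sum>j\<in>J. a k j * \<alpha> j i)" for k i
  have row: "(\<Sum>j\<in>J. a k j * V j l) = (\<Sum>i<r. \<beta> k i * w i l)" if "l \<in> {1..M}" for k l
  proof -
    have "(\<Sum>j\<in>J. a k j * V j l) = (\<Sum>j\<in>J. a k j * (\<Sum>i<r. \<alpha> j i * w i l))"
      using rep that by (intro sum.cong) auto
    then show ?thesis
      unfolding \<beta>_def by (simp add: sum_distrib_left sum_distrib_right mult.assoc sum.swap[of _ J])
  qed
  have unit: "(\<Sum>l\<in>{1..M}. (cmod (w i l))\<^sup>2) = 1" if "i < r" for i
  proof -
    have "complex_of_real (\<Sum>l\<in>{1..M}. (cmod (w i l))\<^sup>2) = 1"
      using on that unfolding orthonormal_family_def cinner_self[symmetric] by simp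
    then show ?thesis by (simp only: of_real_eq_1_iff)
  qed
  have coeff_bound: "(\<Sum>i<r. (cmod (\<beta> k i))\<^sup>2) \<le> S" if k: "k \<in> {1..M}" for k
  proof -
    have "(\<Sum>l\<in>{1..M}. (cmod (\<Sum>j\<in>J. a k j * V j l))\<^sup>2)
        = (\<Sum>l\<in>{1..M}. (cmod (\<Sum>i<r. \<beta> k i * w i l))\<^sup>2)"
      by (rule sum.cong[OF refl]) (simp add: row)
    then show ?thesis using rows[OF k] orthonormal_family_parseval[OF on, of "\<beta> k"] by simp
  qed
  have "(\<Sum>k\<in>{1..M}. (cmod (\<Sum>j\<in>J. a k j * V j k))\<^sup>2) \<le> (\<Sum>k\<in>{1..M}. S * (\<Sum>i<r. (cmod (w i k))\<^sup>2))"
  proof (rule sum_mono)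
    fix k assume k: "k \<in> {1..M}"
    have "(cmod (\<Sum>j\<in>J. a k j * V j k))\<^sup>2 \<le> (\<Sum>i<r. (cmod (\<beta> k i))\<^sup>2) * (\<Sum>i<r. (cmod (w i k))\<^sup>2)"
      unfolding row[OF k] by (rule norm_sum_mult_square_le)
    also have "\<dots> \<le> S * (\<Sum>i<r. (cmod (w i k))\<^sup>2)"
      by (rule mult_right_mono[OF coeff_bound[OF k]]) (simp add: sum_nonneg)
    finally show "(cmod (\<Sum>j\<in>J. a k j * V j k))\<^sup>2 \<le> S * (\<Sum>i<r. (cmod (w i k))\<^sup>2)" .
  qed
  also have "\<dots> = S * (\<Sum>i<r. \<Sum>k\<in>{1..M}. (cmod (w i k))\<^sup>2)"
    by (simp add: sum_distrib_left) (rule sum.swap)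
  also have "\<dots> = S * real r" using unit by simp
  also have "\<dots> \<le> real (card J) * S" using r S by (simp add: mult.commute mult_left_mono)
  finally show ?thesis .
qed

lemma square_powr_half_mult:
  fixes x t a :: real
  assumes "0 \<le> x"
  shows "(x powr (a / 2) * t)\<^sup>2 = x powr a * t\<^sup>2"
proof -
  have "(x powr (a / 2))\<^sup>2 = x powr a"
    using assms by (simp add: power2_eq_square flip: powr_add)
  then show ?thesis by (simp add: power_mult_distrib)
qed

lemma powr_diff_2_mult_square:
  fixes x p :: real
  assumes "0 \<le> x" and "0 < p"
  shows "x powr (p - 2) * x\<^sup>2 = x powr p"
proof (cases "x = 0")
  case False
  then have "x\<^sup>2 = x powr 2" using assms by simp
  then show ?thesis by (simp flip: powr_add)
qed (use assms in simp)

lemma powr_diff_2_mult_square_le: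
  fixes x t p :: real
  assumes "0 \<le> t" and "t \<le> x" and "0 < p" and "p \<le> 2"
  shows "x powr (p - 2) * t\<^sup>2 \<le> t powr p"
proof (cases "t = 0")
  case False
  then have t: "t > 0" and x: "x > 0" using assms by auto
  have "t\<^sup>2 = t powr p * t powr (2 - p)" using t by (simp flip: powr_add)
  also have "\<dots> \<le> t powr p * x powr (2 - p)"
    using assms by (intro mult_left_mono powr_mono2) auto
  finally have "x powr (p - 2) * t\<^sup>2 \<le> x powr (p - 2) * (t powr p * x powr (2 - p))"
    by (rule mult_left_mono) simp
  also have "\<dots> = t powr p * (x powr (p - 2) * x powr (2 - p))" by simp
  also have "x powr (p - 2) * x powr (2 - p) = 1" using x by (simp flip: powr_add)
  finally show ?thesis by simp
qed (use assms in simp)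

text \<open>Hoelder's inequality with the exponents p/(p-2) and p/2, obtained by summing Young's
  inequality for the normalised terms.\<close>
lemma holder_powr_diff_2_mult_square:
  fixes x t :: "'i \<Rightarrow> real" and p T :: real
  assumes I: "finite I" and p: "p > 2" and T: "T \<ge> 0" "(\<Sum>l\<in>I. t l powr p) \<le> T powr p"
    and x: "\<And>l. 0 \<le> x l" and t: "\<And>l. 0 \<le> t l"
  shows "(\<Sum>l\<in>I. x l powr (p - 2) * (t l)\<^sup>2) \<le> (\<Sum>l\<in>I. x l powr p) powr (1 - 2 / p) * T\<^sup>2"
proof -
  define A where "A = (\<Sum>l\<in>I. x l powr p)"
  show ?thesis
  proof (cases "A = 0 \<or> T = 0")
    case True
    have "x l powr (p - 2) * (t l)\<^sup>2 = 0" if l: "l \<in> I" for l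
    proof (cases "A = 0")
      case True
      then have "x l powr p = 0" using I l sum_nonneg_eq_0_iff[of I "\<lambda>l. x l powr p"] by (auto simp: A_def)
      then show ?thesis by simp
    next
      case False
      with \<open>A = 0 \<or> T = 0\<close> have "(\<Sum>l\<in>I. t l powr p) = 0" using T by (simp add: antisym sum_nonneg)
      then have "t l powr p = 0" using I l sum_nonneg_eq_0_iff[of I "\<lambda>l. t l powr p"] by auto
      then show ?thesis by simp
    qed
    then have "(\<Sum>l\<in>I. x l powr (p - 2) * (t l)\<^sup>2) = 0" by (rule sum.neutral[OF ballI])
    then show ?thesis by (simp add: A_def[symmetric])
  next
    case False
    have "A \<ge> 0" unfolding A_def by (rule sum_nonneg) simp
    then have A: "A > 0" and T: "T > 0" using False T by auto
    define P where "P = p / (p - 2)"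
    define Q where "Q = p / 2"
    have P: "P > 1" and Q: "Q > 1" and PQ: "1/P + 1/Q = 1"
      using p by (simp_all add: P_def Q_def field_simps)
    have P_exp: "(p - 2) * P = p" using p by (simp add: P_def)
    define K where "K = A powr (1 - 2 / p)"
    have K: "K > 0" and KP: "K powr P = A"
      using A p by (simp_all add: K_def P_def powr_powr field_simps)
    have young: "(x l powr (p - 2) / K) * ((t l)\<^sup>2 / T\<^sup>2) \<le> (x l powr p / A) / P + (t l powr p / T powr p) / Q"
      for l
    proof -
      have "(x l powr (p - 2) / K) * ((t l)\<^sup>2 / T\<^sup>2)
          \<le> (x l powr (p - 2) / K) powr P / P + ((t l)\<^sup>2 / T\<^sup>2) powr Q / Q"
        by (rule Youngs_inequality[OF P Q PQ]) (use K T in auto)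
      also have "(x l powr (p - 2) / K) powr P = (x l powr (p - 2)) powr P / K powr P"
        using x[of l] K by (simp add: powr_divide)
      also have "\<dots> = x l powr p / A" by (simp add: powr_powr KP P_exp)
      also have "((t l)\<^sup>2 / T\<^sup>2) powr Q = t l powr p / T powr p"
        using t[of l] T by (simp add: powr_divide powr_powr Q_def flip: powr_numeral)
      finally show ?thesis .
    qed
    have "(\<Sum>l\<in>I. x l powr (p - 2) * (t l)\<^sup>2) / (K * T\<^sup>2)
        = (\<Sum>l\<in>I. (x l powr (p - 2) / K) * ((t l)\<^sup>2 / T\<^sup>2))"
      by (simp add: sum_divide_distrib)
    also have "\<dots> \<le> (\<Sum>l\<in>I. (x l powr p / A) / P + (t l powr p / T powr p) / Q)"
      by (rule sum_mono) (rule young)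
    also have "\<dots> = (\<Sum>l\<in>I. x l powr p) / A / P + (\<Sum>l\<in>I. t l powr p) / T powr p / Q"
      by (simp add: sum.distrib sum_divide_distrib)
    also have "\<dots> \<le> 1 / P + 1 / Q"
      using A T(1) \<open>(\<Sum>l\<in>I. t l powr p) \<le> T powr p\<close> P Q
      by (intro add_mono divide_right_mono) (auto simp: divide_le_eq simp flip: A_def)
    finally have "(\<Sum>l\<in>I. x l powr (p - 2) * (t l)\<^sup>2) / (K * T\<^sup>2) \<le> 1" using PQ by simp
    then show ?thesis using K T by (simp add: A_def K_def divide_le_eq)
  qed
qed

section \<open>The p-summing norm of the identity\<close>

definition weak_p_norm :: "real \<Rightarrow> ('k::real_normed_field \<Rightarrow> 'v::ab_group_add \<Rightarrow> 'v) \<Rightarrow> ('v \<Rightarrow> real)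
    \<Rightarrow> nat \<Rightarrow> (nat \<Rightarrow> 'v) \<Rightarrow> real" where
  "weak_p_norm p s N M x = (SUP \<phi>\<in>dual_ball s N. (\<Sum>k\<in>{1..M}. norm (\<phi> (x k)) powr p) powr (1/p))"

lemma pi_summing_le:
  assumes "0 \<le> C"
    and "\<And>M x. (\<Sum>k\<in>{1..M}. NF (u (x k)) powr p) powr (1/p) \<le> C * weak_p_norm p s NE M x"
  shows "pi_summing p s NE NF u \<le> C"
  unfolding pi_summing_def
  using assms unfolding weak_p_norm_def by (intro cInf_lower bdd_belowI[of _ 0]) auto

text \<open>The scalar field is embedded isometrically into the complex numbers by emb, so that real
  and complex spaces are handled at once.\<close>
locale finite_dim_normed_space =
  fixes s :: "'k::real_normed_field \<Rightarrow> 'v::ab_group_add \<Rightarrow> 'v" and N :: "'v \<Rightarrow> real" and n :: nat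
    and emb :: "'k \<Rightarrow> complex"
  assumes normed: "normed_sp s N" and dimension: "has_dim s n"
    and norming: "\<And>x. \<exists>\<psi>\<in>dual_ball s N. N x \<le> norm (\<psi> x)"
    and emb_mult: "emb (a * b) = emb a * emb b" and emb_add: "emb (a + b) = emb a + emb b"
    and emb_norm: "norm (emb a) = norm a"
begin

sublocale vector_space s
  using normed unfolding normed_sp_def by auto

lemma dual_ball_le: "\<phi> \<in> dual_ball s N \<Longrightarrow> norm (\<phi> x) \<le> N x"
  unfolding dual_ball_def by auto

lemma N_nonneg: "0 \<le> N x"
  using norming[of x] dual_ball_le by (meson norm_ge_zero order_trans)

lemma zero_in_dual_ball: "(\<lambda>_. 0) \<in> dual_ball s N"
  unfolding dual_ball_def Vector_Spaces.linear_iff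
  using vector_space_axioms vector_space_over_itself.vector_space_axioms N_nonneg by auto

lemma emb_sum: "emb (sum f A) = (\<Sum>a\<in>A. emb (f a))"
proof (induction A rule: infinite_finite_induct)
  case (infinite A)
  then show ?case using emb_norm[of 0] by simp
qed (use emb_norm[of 0] emb_add in simp_all)

lemma finite_basis_card_dim:
  obtains B where "finite B" "independent B" "span B = UNIV" "card B = n"
proof -
  obtain F where F: "finite F" "span F = UNIV" and dim: "dim UNIV = n"
    using dimension unfolding has_dim_def by blast
  obtain B where B: "independent B" "UNIV \<subseteq> span B" "card B = dim UNIV"
    by (rule basis_exists[of UNIV])
  have "finite B" using independent_span_bound[OF F(1) B(1)] F(2) by auto
  with B dim show ?thesis by (intro that) auto
qed

lemma dual_ball_expansion:
  assumes "\<phi> \<in> dual_ball s N" and "independent B" and "span B = UNIV" and "finite B"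
  shows "\<phi> y = (\<Sum>b\<in>B. representation B y b * \<phi> b)"
proof -
  have hom: "module_hom s (*) \<phi>" using assms(1) unfolding dual_ball_def by (simp add: module_hom_iff_linear)
  have "\<phi> y = \<phi> (\<Sum>b\<in>B. s (representation B y b) b)"
    using assms(2-4) by (simp add: sum_representation_eq)
  also have "\<dots> = (\<Sum>b\<in>B. representation B y b * \<phi> b)"
    by (simp add: module_hom.sum[OF hom] module_hom.scale[OF hom])
  finally show ?thesis .
qed

lemma weighted_square_sum_le_dim:
  fixes M :: nat and x :: "nat \<Rightarrow> 'v" and lam :: "nat \<Rightarrow> real"
  assumes S: "S \<ge> 0"
    and rows: "\<And>\<phi>. \<phi> \<in> dual_ball s N \<Longrightarrow> (\<Sum>l\<in>{1..M}. (lam l * norm (\<phi> (x l)))\<^sup>2) \<le> S"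
  shows "(\<Sum>k\<in>{1..M}. (lam k * N (x k))\<^sup>2) \<le> real n * S"
proof -
  obtain B where B: "finite B" "independent B" "span B = UNIV" "card B = n"
    by (rule finite_basis_card_dim)
  obtain \<psi> where \<psi>: "\<And>y. \<psi> y \<in> dual_ball s N" and \<psi>_norming: "\<And>y. N y \<le> norm (\<psi> y y)"
    using norming by metis
  define a where "a k b = emb (\<psi> (x k) b)" for k b
  define V where "V b l = complex_of_real (lam l) * emb (representation B (x l) b)" for b l
  have entry: "(\<Sum>b\<in>B. a k b * V b l) = complex_of_real (lam l) * emb (\<psi> (x k) (x l))" for k l
    unfolding dual_ball_expansion[OF \<psi> B(2,3,1), of "x k" "x l"] emb_sum emb_mult a_def V_def
    by (simp add: sum_distrib_left algebra_simps)
  have entry_norm: "(cmod (\<Sum>b\<in>B. a k b * V b l))\<^sup>2 = (lam l * norm (\<psi> (x k) (x l)))\<^sup>2" for k l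
    unfolding entry norm_mult emb_norm by (simp add: power_mult_distrib)
  have "(\<Sum>k\<in>{1..M}. (lam k * N (x k))\<^sup>2) \<le> (\<Sum>k\<in>{1..M}. (cmod (\<Sum>b\<in>B. a k b * V b k))\<^sup>2)"
  proof (rule sum_mono)
    fix k
    have "(lam k * N (x k))\<^sup>2 = (\<bar>lam k\<bar> * N (x k))\<^sup>2" by (simp add: power_mult_distrib)
    also have "\<dots> \<le> (\<bar>lam k\<bar> * norm (\<psi> (x k) (x k)))\<^sup>2"
      using \<psi>_norming[of "x k"] N_nonneg[of "x k"] by (intro power_mono mult_left_mono) auto
    finally show "(lam k * N (x k))\<^sup>2 \<le> (cmod (\<Sum>b\<in>B. a k b * V b k))\<^sup>2"
      unfolding entry_norm by (simp add: power_mult_distrib)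
  qed
  also have "\<dots> \<le> real (card B) * S"
    by (rule diagonal_square_sum_le_card_times_row_bound[where a = a and V = V, OF B(1) S])
      (simp only: entry_norm, rule rows[OF \<psi>])
  finally show ?thesis using B(4) by simp
qed

lemma powr_sum_le_dim:
  fixes M :: nat and x :: "nat \<Rightarrow> 'v"
  assumes p: "0 < p" and S: "S \<ge> 0"
    and rows: "\<And>\<phi>. \<phi> \<in> dual_ball s N \<Longrightarrow>
      (\<Sum>l\<in>{1..M}. N (x l) powr (p - 2) * (norm (\<phi> (x l)))\<^sup>2) \<le> S"
  shows "(\<Sum>k\<in>{1..M}. N (x k) powr p) \<le> real n * S"
proof -
  define lam where "lam l = N (x l) powr ((p - 2) / 2)" for l
  have "(\<Sum>k\<in>{1..M}. (lam k * N (x k))\<^sup>2) \<le> real n * S"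
    using S rows by (intro weighted_square_sum_le_dim) (simp_all add: lam_def square_powr_half_mult N_nonneg)
  then show ?thesis
    by (simp add: lam_def square_powr_half_mult N_nonneg powr_diff_2_mult_square p)
qed

lemma weak_p_norm_bounds:
  assumes p: "0 < p"
  shows "0 \<le> weak_p_norm p s N M x"
    and "\<phi> \<in> dual_ball s N \<Longrightarrow> (\<Sum>k\<in>{1..M}. norm (\<phi> (x k)) powr p) \<le> weak_p_norm p s N M x powr p"
proof -
  define f where "f \<phi> = (\<Sum>k\<in>{1..M}. norm (\<phi> (x k)) powr p) powr (1/p)" for \<phi> :: "'v \<Rightarrow> 'k"
  have "f \<phi> \<le> (\<Sum>k\<in>{1..M}. N (x k) powr p) powr (1/p)" if "\<phi> \<in> dual_ball s N" for \<phi>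
    unfolding f_def using that p dual_ball_le
    by (intro powr_mono2 sum_mono sum_nonneg) (auto intro: powr_mono2)
  then have upper: "f \<phi> \<le> weak_p_norm p s N M x" if "\<phi> \<in> dual_ball s N" for \<phi>
    unfolding weak_p_norm_def f_def[symmetric] using that by (intro cSUP_upper bdd_aboveI2) auto
  show "0 \<le> weak_p_norm p s N M x"
    using upper[OF zero_in_dual_ball] by (simp add: f_def)
  assume \<phi>: "\<phi> \<in> dual_ball s N"
  have "(\<Sum>k\<in>{1..M}. norm (\<phi> (x k)) powr p) = f \<phi> powr p"
    using p by (simp add: f_def powr_powr sum_nonneg)
  also have "\<dots> \<le> weak_p_norm p s N M x powr p"
    using upper[OF \<phi>] p by (intro powr_mono2) (auto simp: f_def)
  finally show "(\<Sum>k\<in>{1..M}. norm (\<phi> (x k)) powr p) \<le> weak_p_norm p s N M x powr p" .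
qed

lemma strong_p_sum_le_small_p:
  assumes p: "0 < p" "p \<le> 2"
  shows "(\<Sum>k\<in>{1..M}. N (x k) powr p) powr (1/p) \<le> real n powr (1/p) * weak_p_norm p s N M x"
proof -
  let ?T = "weak_p_norm p s N M x"
  have "(\<Sum>k\<in>{1..M}. N (x k) powr p) \<le> real n * ?T powr p"
  proof (rule powr_sum_le_dim[OF p(1)])
    fix \<phi> assume \<phi>: "\<phi> \<in> dual_ball s N"
    have "(\<Sum>l\<in>{1..M}. N (x l) powr (p - 2) * (norm (\<phi> (x l)))\<^sup>2) \<le> (\<Sum>l\<in>{1..M}. norm (\<phi> (x l)) powr p)"
      using dual_ball_le[OF \<phi>] p by (intro sum_mono powr_diff_2_mult_square_le) auto
    also have "\<dots> \<le> ?T powr p" by (rule weak_p_norm_bounds(2)[OF p(1) \<phi>])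
    finally show "(\<Sum>l\<in>{1..M}. N (x l) powr (p - 2) * (norm (\<phi> (x l)))\<^sup>2) \<le> ?T powr p" .
  qed simp
  then have "(\<Sum>k\<in>{1..M}. N (x k) powr p) powr (1/p) \<le> (real n * ?T powr p) powr (1/p)"
    using p by (intro powr_mono2) (auto simp: sum_nonneg)
  also have "\<dots> = real n powr (1/p) * ?T"
    using weak_p_norm_bounds(1)[OF p(1)] p by (simp add: powr_mult powr_powr)
  finally show ?thesis .
qed

lemma strong_p_sum_le_large_p:
  assumes p: "2 < p"
  shows "(\<Sum>k\<in>{1..M}. N (x k) powr p) powr (1/p) \<le> sqrt (real n) * weak_p_norm p s N M x"
proof -
  let ?T = "weak_p_norm p s N M x"
  define A where "A = (\<Sum>k\<in>{1..M}. N (x k) powr p)"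
  have A: "A \<ge> 0" unfolding A_def by (simp add: sum_nonneg)
  have T: "?T \<ge> 0" using weak_p_norm_bounds(1) p by simp
  have "A \<le> real n * (A powr (1 - 2/p) * ?T\<^sup>2)"
    unfolding A_def using p T
    by (intro powr_sum_le_dim holder_powr_diff_2_mult_square weak_p_norm_bounds(2))
       (auto simp: N_nonneg)
  show ?thesis
  proof (cases "A = 0")
    case False
    then have "A powr (2/p) * A powr (1 - 2/p) \<le> (real n * ?T\<^sup>2) * A powr (1 - 2/p)"
      using \<open>A \<le> _\<close> A by (simp add: algebra_simps flip: powr_add)
    then have "A powr (2/p) \<le> real n * ?T\<^sup>2" using False A by simp
    then have "(A powr (2/p)) powr (1/2) \<le> (real n * ?T\<^sup>2) powr (1/2)" by (intro powr_mono2) auto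
    then show ?thesis using T by (simp add: A_def powr_powr powr_half_sqrt real_sqrt_mult)
  qed (use T in \<open>simp add: A_def\<close>)
qed

theorem pi_summing_id_le:
  assumes "0 < p"
  shows "pi_summing p s N N id \<le> real n powr max (1/p) (1/2)"
proof (rule pi_summing_le)
  fix M x
  show "(\<Sum>k\<in>{1..M}. N (id (x k)) powr p) powr (1/p)
      \<le> real n powr max (1/p) (1/2) * weak_p_norm p s N M x"
  proof (cases "p \<le> 2")
    case True
    then have "max (1/p) (1/2) = 1/p" using assms by (simp add: max_def field_simps)
    then show ?thesis using strong_p_sum_le_small_p[OF assms True] by simp
  next
    case False
    then have "max (1/p) (1/2) = 1/2" using assms by (simp add: max_def field_simps)
    then show ?thesis using strong_p_sum_le_large_p[of p] False by (simp add: powr_half_sqrt)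
  qed
qed simp

end

theorem mainTheorem1:
  fixes p :: real and n :: nat
    and sR :: "real \<Rightarrow> 'a::ab_group_add \<Rightarrow> 'a" and NR :: "'a \<Rightarrow> real"
    and sC :: "complex \<Rightarrow> 'b::ab_group_add \<Rightarrow> 'b" and NC :: "'b \<Rightarrow> real"
  assumes "0 < p"
  shows "(normed_sp sR NR \<and> has_dim sR n \<longrightarrow>
            pi_summing p sR NR NR id \<le> real n powr max (1/p) (1/2))
       \<and> (normed_sp sC NC \<and> has_dim sC n \<longrightarrow>
            pi_summing p sC NC NC id \<le> real n powr max (1/p) (1/2))"
proof (intro conjI impI)
  assume E: "normed_sp sR NR \<and> has_dim sR n"
  then obtain F where F: "finite F" "module.span sR F = UNIV" unfolding has_dim_def by blast
  interpret finite_dim_normed_space sR NR n complex_of_real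
    by unfold_locales (use E dual_ball_norming_real[OF _ F] in auto)
  show "pi_summing p sR NR NR id \<le> real n powr max (1/p) (1/2)"
    using assms by (rule pi_summing_id_le)
next
  assume E: "normed_sp sC NC \<and> has_dim sC n"
  then obtain F where F: "finite F" "module.span sC F = UNIV" unfolding has_dim_def by blast
  interpret finite_dim_normed_space sC NC n id
    by unfold_locales (use E dual_ball_norming_complex[OF _ F] in auto)
  show "pi_summing p sC NC NC id \<le> real n powr max (1/p) (1/2)"
    using assms by (rule pi_summing_id_le)
qed

end
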